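(* Let $f:\mathbb{R}^n\to\mathbb{R}$ be $\mathcal C^2$, $\mu$-strongly convex, with $L$-Lipschitz gradient ($0<\mu<L$) and $\eta$-Lipschitz Hessian, let $x_0\in\mathbb{R}^n$, $k\ge1$ an integer, $\rho=1-\frac{\mu}{L}$, and define for $C\ge1$ $$\hat\rho(C)=\tilde\rho(C)+3\frac{\eta}{L^2}\|\nabla f(x_0)\|k^2C^2.$$ Let $C_0=\frac{2+\rho^k}{2-\rho^k}$ and $a=\frac{\eta}{L^2}\|\nabla f(x_0)\|$. Then: (i) if $a<\frac{\rho^k(1-\rho^k)(2-\rho^k)}{3k^2(2+\rho^k)^2}$, there exists a nonempty interval $I$ containing $C_0$ such that $\hat\rho(C)<\rho^k$ for $C\in I$; (ii) if $a<\min\big(\frac{\rho^k(1-\rho^k)(2-\rho^k)}{3k^2(2+\rho^k)^2},\frac{\rho^k-\rho_1}{3k^2C_1^2}\big)$, then $\hat\rho(C)<\rho^k$ for $C\in[C_0,C_1]$; (iii) if $a<\min\big(\frac{\rho^k(1-\rho^k)(2-\rho^k)}{3k^2(2+\rho^k)^2},\frac{\rho^k-\rho_*}{3k^2C_*^2}\big)$, then $\hat\rho(C)<\rho^k$ for $C\in[C_0,C_*]$.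
   Context: $\mathbb{R}_k[X]$ denotes real polynomials of degree at most $k$; $\|p\|_1$ is the sum of absolute values of coefficients of $p$. $\tilde\rho(C)=\min\{\max_{x\in[0,\rho]}|p(x)|:p\in\mathbb{R}_k[X],\ p(1)=1,\ \|p\|_1\le C\}$. $T_k$ is the first-kind Chebyshev polynomial of degree $k$; $C_*=\|p_*\|_1$ with $p_*(X)=T_k(\frac{2X-\rho}{\rho})/|T_k(\frac{2-\rho}{\rho})|$; $\rho_*=\frac{2\beta^k}{1+\beta^{2k}}$ with $\beta=\frac{1-\sqrt{1-\rho}}{1+\sqrt{1-\rho}}$; $\beta_\rho=\frac{\sqrt{1+\rho}-\sqrt{1-\rho}}{\sqrt{1+\rho}+\sqrt{1-\rho}}$, $\rho_1=\frac{2\beta_\rho^k}{1+\beta_\rho^{2k}}$, $C_1=\frac{\rho_1}{2\rho^k}\big((1-\sqrt{1+\rho^2})^k+(1+\sqrt{1+\rho^2})^k\big)$. *)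

theory Defs
  imports "HOL-Analysis.Analysis" "HOL-Computational_Algebra.Polynomial"
begin

definition strongly_convex_on :: "'a::real_inner set \<Rightarrow> real \<Rightarrow> ('a \<Rightarrow> real) \<Rightarrow> bool" where
  "strongly_convex_on S \<mu> f \<longleftrightarrow> convex_on S (\<lambda>x. f x - \<mu> / 2 * (norm x)\<^sup>2)"

definition poly_l1 :: "real poly \<Rightarrow> real" where
  "poly_l1 p = (\<Sum>i\<le>degree p. \<bar>coeff p i\<bar>)"

definition rho_tilde :: "nat \<Rightarrow> real \<Rightarrow> real \<Rightarrow> real" where
  "rho_tilde k \<rho> C = Inf {Sup ((\<lambda>x. \<bar>poly p x\<bar>) ` {0..\<rho>}) | p.
       degree p \<le> k \<and> poly p 1 = 1 \<and> poly_l1 p \<le> C}"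

fun cheb :: "nat \<Rightarrow> real poly" where
  "cheb 0 = 1"
| "cheb (Suc 0) = [:0, 1:]"
| "cheb (Suc (Suc n)) = [:0, 2:] * cheb (Suc n) - cheb n"

definition p_star :: "nat \<Rightarrow> real \<Rightarrow> real poly" where
  "p_star k \<rho> = smult (1 / \<bar>poly (cheb k) ((2 - \<rho>) / \<rho>)\<bar>) (pcompose (cheb k) [:-1, 2 / \<rho>:])"

definition C_star :: "nat \<Rightarrow> real \<Rightarrow> real" where
  "C_star k \<rho> = poly_l1 (p_star k \<rho>)"

definition rho_star :: "nat \<Rightarrow> real \<Rightarrow> real" where
  "rho_star k \<rho> = (let \<beta> = (1 - sqrt (1 - \<rho>)) / (1 + sqrt (1 - \<rho>)) in 2 * \<beta> ^ k / (1 + \<beta> ^ (2 * k)))"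

definition rho_one :: "nat \<Rightarrow> real \<Rightarrow> real" where
  "rho_one k \<rho> = (let \<beta> = (sqrt (1 + \<rho>) - sqrt (1 - \<rho>)) / (sqrt (1 + \<rho>) + sqrt (1 - \<rho>))
                   in 2 * \<beta> ^ k / (1 + \<beta> ^ (2 * k)))"

definition C_one :: "nat \<Rightarrow> real \<Rightarrow> real" where
  "C_one k \<rho> = rho_one k \<rho> / (2 * \<rho> ^ k) *
     ((1 - sqrt (1 + \<rho>\<^sup>2)) ^ k + (1 + sqrt (1 + \<rho>\<^sup>2)) ^ k)"

(* rho_hat(C) = rho_tilde(C) + 3 (eta/L^2) |grad f(x0)| k^2 C^2, written with a = (eta/L^2)|grad f(x0)| *)
definition rho_hat :: "nat \<Rightarrow> real \<Rightarrow> real \<Rightarrow> real \<Rightarrow> real" where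
  "rho_hat k \<rho> a C = rho_tilde k \<rho> C + 3 * a * (real k)\<^sup>2 * C\<^sup>2"

end

theory Submission
  imports Defs
begin

(* rho_hat is rho_tilde plus the convex quadratic 3 a k^2 C^2, and rho_tilde is bounded along a
   segment [C0, C1] by the convex combination of the bounds certified at the ends, since a convex
   combination of two admissible polynomials is admissible.  So rho_hat < rho^k on [C0, C1] as soon
   as it holds at both ends with an explicit certificate.  At C0 the certificate is
   (2 X^k - rho^k) / (2 - rho^k), bounded by rho^k / (2 - rho^k) on [0, rho], and a < B is exactly
   the margin needed there; continuity then gives the interval of (i).  At C_1 and C_* the
   certificates are T_k(X/rho) / T_k(1/rho) and p_*, whose sup norms on [0, rho] are
   rho_1 = 1 / T_k(1/rho) and rho_* = 1 / T_k((2 - rho)/rho) by the closed form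
   T_k((b + 1/b)/2) = (b^k + b^-k)/2; the l1 norm of T_k(X/rho) is bounded by C_1 through the
   three-term recurrence. *)

lemma poly_l1_eq_sum_atMost:
  assumes "degree p \<le> N"
  shows "poly_l1 p = (\<Sum>i\<le>N. \<bar>coeff p i\<bar>)"
  unfolding poly_l1_def
  by (rule sum.mono_neutral_left) (use assms in \<open>auto simp: coeff_eq_0\<close>)

lemma poly_l1_add_le: "poly_l1 (p + q) \<le> poly_l1 p + poly_l1 q"
proof -
  let ?N = "max (degree p) (degree q)"
  have "poly_l1 (p + q) = (\<Sum>i\<le>?N. \<bar>coeff (p + q) i\<bar>)"
    by (rule poly_l1_eq_sum_atMost) (meson degree_add_le max.cobounded1 max.cobounded2)
  also have "\<dots> \<le> (\<Sum>i\<le>?N. \<bar>coeff p i\<bar> + \<bar>coeff q i\<bar>)"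
    by (rule sum_mono) (simp add: abs_triangle_ineq)
  also have "\<dots> = poly_l1 p + poly_l1 q"
    by (simp add: sum.distrib poly_l1_eq_sum_atMost[of p ?N] poly_l1_eq_sum_atMost[of q ?N])
  finally show ?thesis .
qed

lemma poly_l1_smult: "poly_l1 (smult c p) = \<bar>c\<bar> * poly_l1 p"
proof -
  have "poly_l1 (smult c p) = (\<Sum>i\<le>degree p. \<bar>coeff (smult c p) i\<bar>)"
    by (rule poly_l1_eq_sum_atMost) (simp add: degree_smult_le)
  then show ?thesis by (simp add: poly_l1_def abs_mult sum_distrib_left)
qed

lemma poly_l1_diff_le: "poly_l1 (p - q) \<le> poly_l1 p + poly_l1 q"
  using poly_l1_add_le[of p "- q"] by (simp add: poly_l1_def)

lemma poly_l1_pCons_0: "poly_l1 (pCons 0 p) = poly_l1 p"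
proof -
  have "poly_l1 (pCons 0 p) = (\<Sum>i\<le>Suc (degree p). \<bar>coeff (pCons 0 p) i\<bar>)"
    by (rule poly_l1_eq_sum_atMost) (simp add: degree_pCons_le)
  also have "\<dots> = (\<Sum>i\<le>degree p. \<bar>coeff p i\<bar>)"
    by (subst sum.atMost_Suc_shift) simp
  finally show ?thesis
    by (simp add: poly_l1_def)
qed

lemma poly_l1_const: "poly_l1 [:c:] = \<bar>c\<bar>"
  by (simp add: poly_l1_def)

lemma poly_l1_monom: "poly_l1 (monom c n) = \<bar>c\<bar>"
proof -
  have "poly_l1 (monom c n) = (\<Sum>i\<le>n. \<bar>coeff (monom c n) i\<bar>)"
    by (rule poly_l1_eq_sum_atMost) (simp add: degree_monom_le)
  also have "\<dots> = (\<Sum>i\<le>n. if i = n then \<bar>c\<bar> else 0)"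
    by (rule sum.cong) (auto simp: coeff_monom)
  finally show ?thesis by simp
qed

lemma degree_cheb_le: "degree (cheb n) \<le> n"
proof (induction n rule: cheb.induct)
  case (3 n)
  have "degree ([:0, 2:] * cheb (Suc n)) \<le> Suc (Suc n)"
    by (rule order.trans[OF degree_mult_le]) (use 3 in auto)
  moreover have "degree (cheb n) \<le> Suc (Suc n)"
    using 3 by simp
  ultimately show ?case
    by (simp add: degree_diff_le)
qed auto

lemma poly_cheb_cos: "poly (cheb n) (cos t) = cos (real n * t)"
proof (induction n rule: cheb.induct)
  case (3 n)
  have "cos (real (Suc (Suc n)) * t) + cos (real n * t) = 2 * cos t * cos (real (Suc n) * t)"
    using cos_add[of "real (Suc n) * t" t] cos_diff[of "real (Suc n) * t" t]
    by (simp add: algebra_simps)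
  with 3 show ?case
    by simp
qed auto

lemma abs_poly_cheb_le_1: "\<bar>x\<bar> \<le> 1 \<Longrightarrow> \<bar>poly (cheb n) x\<bar> \<le> 1"
  using poly_cheb_cos[of n "arccos x"] by (simp add: cos_arccos)

lemma poly_cheb_half_sum:
  fixes b c :: real
  assumes "b * c = 1"
  shows "poly (cheb n) ((b + c) / 2) = (b ^ n + c ^ n) / 2"
proof (induction n rule: cheb.induct)
  case (3 n)
  have "(b + c) * (b ^ Suc n + c ^ Suc n)
      = b ^ Suc (Suc n) + c ^ Suc (Suc n) + (b * c) * (b ^ n + c ^ n)"
    by (simp add: algebra_simps)
  then show ?case
    using 3 assms by (simp add: field_simps)
qed auto

lemma poly_cheb_joukowski:
  fixes \<beta> :: real
  assumes "0 < \<beta>"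
  shows "poly (cheb n) ((\<beta> + 1 / \<beta>) / 2) = (1 + \<beta> ^ (2 * n)) / (2 * \<beta> ^ n)"
  using poly_cheb_half_sum[of \<beta> "1 / \<beta>" n] assms
  by (simp add: field_simps power_mult power2_eq_square power_mult_distrib)

(* T_n(cX), defined through the recurrence rather than by composition so that its l1 norm
   can be bounded by induction. *)
fun cheb_scaled :: "real \<Rightarrow> nat \<Rightarrow> real poly" where
  "cheb_scaled c 0 = 1"
| "cheb_scaled c (Suc 0) = [:0, c:]"
| "cheb_scaled c (Suc (Suc n)) = [:0, 2 * c:] * cheb_scaled c (Suc n) - cheb_scaled c n"

lemma poly_cheb_scaled: "poly (cheb_scaled c n) x = poly (cheb n) (c * x)"
  by (induction c n rule: cheb_scaled.induct) (auto simp: algebra_simps)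

lemma degree_cheb_scaled_le: "degree (cheb_scaled c n) \<le> n"
proof (induction c n rule: cheb_scaled.induct)
  case (3 c n)
  have "degree ([:0, 2 * c:] * cheb_scaled c (Suc n)) \<le> Suc (Suc n)"
    by (rule order.trans[OF degree_mult_le]) (use 3 in auto)
  moreover have "degree (cheb_scaled c n) \<le> Suc (Suc n)"
    using 3 by simp
  ultimately show ?case
    by (simp add: degree_diff_le)
qed auto

lemma poly_l1_cheb_scaled_le:
  assumes "0 \<le> c"
  shows "poly_l1 (cheb_scaled c n) \<le> ((c + sqrt (c\<^sup>2 + 1)) ^ n + (c - sqrt (c\<^sup>2 + 1)) ^ n) / 2"
  using assms
proof (induction c n rule: cheb_scaled.induct)
  case (1 c)
  then show ?case by (simp add: poly_l1_def)
next
  case (2 c)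
  then show ?case by (simp add: poly_l1_def)
next
  case (3 c n)
  define A where "A = c + sqrt (c\<^sup>2 + 1)"
  define B where "B = c - sqrt (c\<^sup>2 + 1)"
  have roots: "A\<^sup>2 = 2 * c * A + 1" "B\<^sup>2 = 2 * c * B + 1"
    unfolding A_def B_def by (simp_all add: power2_eq_square algebra_simps)
  have "poly_l1 (cheb_scaled c (Suc (Suc n)))
      \<le> 2 * c * poly_l1 (cheb_scaled c (Suc n)) + poly_l1 (cheb_scaled c n)"
    using poly_l1_diff_le[of "[:0, 2 * c:] * cheb_scaled c (Suc n)" "cheb_scaled c n"] 3(3)
    by (simp add: poly_l1_smult poly_l1_pCons_0)
  also have "\<dots> \<le> 2 * c * ((A ^ Suc n + B ^ Suc n) / 2) + (A ^ n + B ^ n) / 2"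
    using 3 by (intro add_mono mult_left_mono) (auto simp: A_def B_def)
  also have "\<dots> = (A\<^sup>2 * A ^ n + B\<^sup>2 * B ^ n) / 2"
    unfolding roots by (simp add: field_simps)
  also have "\<dots> = (A ^ Suc (Suc n) + B ^ Suc (Suc n)) / 2"
    by (simp add: power2_eq_square)
  finally show ?case
    by (simp add: A_def B_def)
qed

definition certifies_rho_tilde :: "nat \<Rightarrow> real \<Rightarrow> real \<Rightarrow> real \<Rightarrow> real poly \<Rightarrow> bool" where
  "certifies_rho_tilde k \<rho> C s p \<longleftrightarrow>
     degree p \<le> k \<and> poly p 1 = 1 \<and> poly_l1 p \<le> C \<and> (\<forall>x\<in>{0..\<rho>}. \<bar>poly p x\<bar> \<le> s)"

lemma rho_tilde_le_if_certifies:
  assumes "0 \<le> \<rho>" and "certifies_rho_tilde k \<rho> C s p"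
  shows "rho_tilde k \<rho> C \<le> s"
proof -
  have bdd: "bdd_above ((\<lambda>x. \<bar>poly q x\<bar>) ` {0..\<rho>})" for q :: "real poly"
    by (intro bounded_imp_bdd_above compact_imp_bounded compact_continuous_image)
      (auto intro!: continuous_intros)
  have "0 \<le> Sup ((\<lambda>x. \<bar>poly q x\<bar>) ` {0..\<rho>})" for q :: "real poly"
    by (rule cSup_upper2[of "\<bar>poly q 0\<bar>"]) (use bdd assms(1) in auto)
  then have "rho_tilde k \<rho> C \<le> Sup ((\<lambda>x. \<bar>poly p x\<bar>) ` {0..\<rho>})"
    unfolding rho_tilde_def using assms(2)
    by (intro cInf_lower) (auto simp: certifies_rho_tilde_def intro!: bdd_belowI[of _ 0])
  also have "\<dots> \<le> s"
    using assms by (intro cSup_least) (auto simp: certifies_rho_tilde_def)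
  finally show ?thesis .
qed

lemma certifies_rho_tilde_mono:
  "certifies_rho_tilde k \<rho> C s p \<Longrightarrow> C \<le> C' \<Longrightarrow> s \<le> s' \<Longrightarrow> certifies_rho_tilde k \<rho> C' s' p"
  by (fastforce simp: certifies_rho_tilde_def)

lemma certifies_rho_tilde_convex:
  assumes p0: "certifies_rho_tilde k \<rho> C0 s0 p0" and p1: "certifies_rho_tilde k \<rho> C1 s1 p1"
    and u: "0 \<le> u" "u \<le> 1"
  shows "certifies_rho_tilde k \<rho> ((1 - u) * C0 + u * C1) ((1 - u) * s0 + u * s1)
           (smult (1 - u) p0 + smult u p1)"
  unfolding certifies_rho_tilde_def
proof (intro conjI ballI)
  show "degree (smult (1 - u) p0 + smult u p1) \<le> k"
    using p0 p1 unfolding certifies_rho_tilde_def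
    by (intro degree_add_le order.trans[OF degree_smult_le]) auto
  show "poly (smult (1 - u) p0 + smult u p1) 1 = 1"
    using p0 p1 by (simp add: certifies_rho_tilde_def algebra_simps)
  have "poly_l1 (smult (1 - u) p0 + smult u p1) \<le> (1 - u) * poly_l1 p0 + u * poly_l1 p1"
    using poly_l1_add_le[of "smult (1 - u) p0" "smult u p1"] u by (simp add: poly_l1_smult)
  also have "\<dots> \<le> (1 - u) * C0 + u * C1"
    using p0 p1 u by (intro add_mono mult_left_mono) (auto simp: certifies_rho_tilde_def)
  finally show "poly_l1 (smult (1 - u) p0 + smult u p1) \<le> (1 - u) * C0 + u * C1" .
  fix x assume x: "x \<in> {0..\<rho>}"
  have "\<bar>poly (smult (1 - u) p0 + smult u p1) x\<bar> \<le> (1 - u) * \<bar>poly p0 x\<bar> + u * \<bar>poly p1 x\<bar>"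
    using u by (simp add: abs_triangle_ineq[THEN order.trans] abs_mult)
  also have "\<dots> \<le> (1 - u) * s0 + u * s1"
    using p0 p1 u x by (intro add_mono mult_left_mono) (auto simp: certifies_rho_tilde_def)
  finally show "\<bar>poly (smult (1 - u) p0 + smult u p1) x\<bar> \<le> (1 - u) * s0 + u * s1" .
qed

lemma certifies_rho_tilde_normalized:
  assumes "degree q \<le> k" "0 < poly q 1" "\<forall>x\<in>{0..\<rho>}. \<bar>poly q x\<bar> \<le> M"
  shows "certifies_rho_tilde k \<rho> (poly_l1 q / poly q 1) (M / poly q 1) (smult (1 / poly q 1) q)"
  using assms
  by (auto simp: certifies_rho_tilde_def poly_l1_smult abs_mult divide_right_mono
      intro: order.trans[OF degree_smult_le])

lemma rho_hat_less_on_interval: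
  assumes "0 \<le> a" "0 \<le> \<rho>"
    and p0: "certifies_rho_tilde k \<rho> C0 s0 p0" and p1: "certifies_rho_tilde k \<rho> C1 s1 p1"
    and "s0 + 3 * a * (real k)\<^sup>2 * C0\<^sup>2 < r" "s1 + 3 * a * (real k)\<^sup>2 * C1\<^sup>2 < r"
    and "C \<in> {C0..C1}"
  shows "rho_hat k \<rho> a C < r"
proof -
  have "C \<in> closed_segment C0 C1"
    using \<open>C \<in> {C0..C1}\<close> by (simp add: closed_segment_eq_real_ivl)
  then obtain u where u: "0 \<le> u" "u \<le> 1" and C: "C = (1 - u) * C0 + u * C1"
    by (auto simp: closed_segment_def)
  have "rho_tilde k \<rho> C \<le> (1 - u) * s0 + u * s1"
    unfolding C using certifies_rho_tilde_convex[OF p0 p1 u] \<open>0 \<le> \<rho>\<close>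
    by (rule rho_tilde_le_if_certifies[rotated])
  moreover have "C\<^sup>2 \<le> (1 - u) * C0\<^sup>2 + u * C1\<^sup>2"
    using convex_onD[OF convex_power2, of u C0 C1] u by (simp add: C)
  ultimately have "rho_hat k \<rho> a C
      \<le> ((1 - u) * s0 + u * s1) + 3 * a * (real k)\<^sup>2 * ((1 - u) * C0\<^sup>2 + u * C1\<^sup>2)"
    unfolding rho_hat_def using \<open>0 \<le> a\<close> by (intro add_mono mult_left_mono) auto
  also have "\<dots>
      = (1 - u) * (s0 + 3 * a * (real k)\<^sup>2 * C0\<^sup>2) + u * (s1 + 3 * a * (real k)\<^sup>2 * C1\<^sup>2)"
    by (simp add: algebra_simps)
  also have "\<dots> < r"
    using assms u by (intro convex_bound_lt) auto
  finally show ?thesis .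
qed

lemma exists_rho_hat_less_right:
  assumes "0 \<le> a" "0 \<le> \<rho>" and p: "certifies_rho_tilde k \<rho> C0 s p"
    and less: "s + 3 * a * (real k)\<^sup>2 * C0\<^sup>2 < r"
  shows "\<exists>hi>C0. \<forall>C\<in>{C0..hi}. rho_hat k \<rho> a C < r"
proof -
  have "((\<lambda>C. s + 3 * a * (real k)\<^sup>2 * C\<^sup>2) \<longlongrightarrow> s + 3 * a * (real k)\<^sup>2 * C0\<^sup>2) (at_right C0)"
    by (intro tendsto_intros)
  then have "\<forall>\<^sub>F C in at_right C0. s + 3 * a * (real k)\<^sup>2 * C\<^sup>2 < r"
    using less by (rule order_tendstoD)
  then obtain b where "C0 < b" and b: "\<And>C. C0 < C \<Longrightarrow> C < b \<Longrightarrow> s + 3 * a * (real k)\<^sup>2 * C\<^sup>2 < r"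
    by (auto simp: eventually_at_right_field)
  define hi where "hi = (C0 + b) / 2"
  have "C0 < hi" "s + 3 * a * (real k)\<^sup>2 * hi\<^sup>2 < r"
    using \<open>C0 < b\<close> by (auto simp: hi_def intro: b)
  moreover have "certifies_rho_tilde k \<rho> hi s p"
    using certifies_rho_tilde_mono[OF p, of hi s] \<open>C0 < hi\<close> by simp
  ultimately show ?thesis
    using rho_hat_less_on_interval[OF assms(1,2) p] less by blast
qed

lemma certifies_rho_tilde_monomial:
  assumes "0 \<le> \<rho>" "\<rho> \<le> 1"
  shows "certifies_rho_tilde k \<rho> ((2 + \<rho> ^ k) / (2 - \<rho> ^ k)) (\<rho> ^ k / (2 - \<rho> ^ k))
           (smult (1 / (2 - \<rho> ^ k)) (monom 2 k - [:\<rho> ^ k:]))"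
proof -
  define q where "q = monom 2 k - [:\<rho> ^ k:]"
  have r: "0 \<le> \<rho> ^ k" "\<rho> ^ k \<le> 1"
    using assms by (simp_all add: power_le_one)
  have q1: "poly q 1 = 2 - \<rho> ^ k"
    by (simp add: q_def poly_monom)
  have "degree q \<le> k"
    unfolding q_def by (intro degree_diff_le) (auto simp: degree_monom_le)
  moreover have "\<forall>x\<in>{0..\<rho>}. \<bar>poly q x\<bar> \<le> \<rho> ^ k"
  proof
    fix x :: real assume "x \<in> {0..\<rho>}"
    then have "0 \<le> x ^ k" "x ^ k \<le> \<rho> ^ k"
      by (auto intro: power_mono)
    then show "\<bar>poly q x\<bar> \<le> \<rho> ^ k"
      by (simp add: q_def poly_monom)
  qed
  ultimately have "certifies_rho_tilde k \<rho> (poly_l1 q / (2 - \<rho> ^ k)) (\<rho> ^ k / (2 - \<rho> ^ k))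
      (smult (1 / (2 - \<rho> ^ k)) q)"
    using certifies_rho_tilde_normalized[of q k \<rho> "\<rho> ^ k"] r by (simp add: q1)
  moreover have "poly_l1 q \<le> 2 + \<rho> ^ k"
    using poly_l1_diff_le[of "monom 2 k" "[:\<rho> ^ k:]"] r
    by (simp add: q_def poly_l1_monom poly_l1_const)
  ultimately show ?thesis
    using r unfolding q_def by (elim certifies_rho_tilde_mono) (auto intro: divide_right_mono)
qed

lemma rho_one_eq_inverse_cheb:
  assumes "0 < \<rho>" "\<rho> < 1"
  shows "0 < poly (cheb k) (1 / \<rho>)" "rho_one k \<rho> = 1 / poly (cheb k) (1 / \<rho>)"
proof -
  define u where "u = sqrt (1 + \<rho>)"
  define v where "v = sqrt (1 - \<rho>)"
  define \<beta> where "\<beta> = (u - v) / (u + v)"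
  have u2: "u\<^sup>2 = 1 + \<rho>" and v2: "v\<^sup>2 = 1 - \<rho>" and "0 < v" "v < u"
    using assms by (auto simp: u_def v_def)
  then have "0 < \<beta>"
    by (simp add: \<beta>_def)
  have "(\<beta> + 1 / \<beta>) / 2 = 2 * (u\<^sup>2 + v\<^sup>2) / (2 * (u\<^sup>2 - v\<^sup>2))"
    using \<open>0 < v\<close> \<open>v < u\<close> by (simp add: \<beta>_def field_simps power2_eq_square)
  also have "\<dots> = 1 / \<rho>"
    using assms by (simp add: u2 v2)
  finally have \<beta>: "(\<beta> + 1 / \<beta>) / 2 = 1 / \<rho>" .
  have T: "poly (cheb k) (1 / \<rho>) = (1 + \<beta> ^ (2 * k)) / (2 * \<beta> ^ k)"
    using poly_cheb_joukowski[OF \<open>0 < \<beta>\<close>, of k] by (simp only: \<beta>)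
  show "0 < poly (cheb k) (1 / \<rho>)"
    unfolding T using \<open>0 < \<beta>\<close> by (simp add: add_pos_nonneg)
  show "rho_one k \<rho> = 1 / poly (cheb k) (1 / \<rho>)"
    unfolding T by (simp add: rho_one_def Let_def \<beta>_def u_def v_def)
qed

lemma rho_star_eq_inverse_cheb:
  assumes "0 < \<rho>" "\<rho> < 1"
  shows "0 < poly (cheb k) ((2 - \<rho>) / \<rho>)" "rho_star k \<rho> = 1 / poly (cheb k) ((2 - \<rho>) / \<rho>)"
proof -
  define v where "v = sqrt (1 - \<rho>)"
  define \<beta> where "\<beta> = (1 - v) / (1 + v)"
  have v2: "v\<^sup>2 = 1 - \<rho>" and "0 < v" "v < 1"
    using assms by (auto simp: v_def)
  then have "0 < \<beta>"
    by (simp add: \<beta>_def)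
  have "(\<beta> + 1 / \<beta>) / 2 = 2 * (1 + v\<^sup>2) / (2 * (1 - v\<^sup>2))"
    using \<open>0 < v\<close> \<open>v < 1\<close> by (simp add: \<beta>_def field_simps power2_eq_square)
  also have "\<dots> = (2 - \<rho>) / \<rho>"
    using assms by (simp add: v2 field_simps)
  finally have \<beta>: "(\<beta> + 1 / \<beta>) / 2 = (2 - \<rho>) / \<rho>" .
  have T: "poly (cheb k) ((2 - \<rho>) / \<rho>) = (1 + \<beta> ^ (2 * k)) / (2 * \<beta> ^ k)"
    using poly_cheb_joukowski[OF \<open>0 < \<beta>\<close>, of k] by (simp only: \<beta>)
  show "0 < poly (cheb k) ((2 - \<rho>) / \<rho>)"
    unfolding T using \<open>0 < \<beta>\<close> by (simp add: add_pos_nonneg)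
  show "rho_star k \<rho> = 1 / poly (cheb k) ((2 - \<rho>) / \<rho>)"
    unfolding T by (simp add: rho_star_def Let_def \<beta>_def v_def)
qed

lemma certifies_rho_tilde_rho_one:
  assumes "0 < \<rho>" "\<rho> < 1"
  shows "certifies_rho_tilde k \<rho> (C_one k \<rho>) (rho_one k \<rho>)
           (smult (rho_one k \<rho>) (cheb_scaled (1 / \<rho>) k))"
proof -
  define q where "q = cheb_scaled (1 / \<rho>) k"
  define c where "c = 1 / \<rho>"
  have q1: "poly q 1 = 1 / rho_one k \<rho>" "0 < poly q 1"
    using rho_one_eq_inverse_cheb[OF assms] by (simp_all add: q_def poly_cheb_scaled)
  have "\<forall>x\<in>{0..\<rho>}. \<bar>poly q x\<bar> \<le> 1"
    using assms by (auto simp: q_def poly_cheb_scaled intro!: abs_poly_cheb_le_1)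
  then have cert: "certifies_rho_tilde k \<rho> (rho_one k \<rho> * poly_l1 q) (rho_one k \<rho>)
      (smult (rho_one k \<rho>) q)"
    using certifies_rho_tilde_normalized[OF _ q1(2), of k \<rho> 1] q1(1)
    by (simp add: q_def degree_cheb_scaled_le mult.commute)
  have "c\<^sup>2 + 1 = (1 + \<rho>\<^sup>2) / \<rho>\<^sup>2"
    using assms by (simp add: c_def field_simps)
  then have sqrt_c: "sqrt (c\<^sup>2 + 1) = sqrt (1 + \<rho>\<^sup>2) / \<rho>"
    using assms by (simp add: real_sqrt_divide)
  have "rho_one k \<rho> * poly_l1 q
      \<le> rho_one k \<rho> * (((c + sqrt (c\<^sup>2 + 1)) ^ k + (c - sqrt (c\<^sup>2 + 1)) ^ k) / 2)"
    using q1 poly_l1_cheb_scaled_le[of c k] assms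
    by (intro mult_left_mono) (simp_all add: q_def c_def)
  also have "\<dots> = C_one k \<rho>"
    using assms unfolding sqrt_c C_one_def
    by (simp add: c_def add_divide_distrib[symmetric] diff_divide_distrib[symmetric] power_divide
        field_simps)
  finally show ?thesis
    using cert unfolding q_def by (elim certifies_rho_tilde_mono) simp_all
qed

lemma certifies_rho_tilde_p_star:
  assumes "0 < \<rho>" "\<rho> < 1"
  shows "certifies_rho_tilde k \<rho> (C_star k \<rho>) (rho_star k \<rho>) (p_star k \<rho>)"
proof -
  define q where "q = pcompose (cheb k) [:-1, 2 / \<rho>:]"
  have T: "0 < poly (cheb k) ((2 - \<rho>) / \<rho>)" "rho_star k \<rho> = 1 / poly (cheb k) ((2 - \<rho>) / \<rho>)"
    using rho_star_eq_inverse_cheb[OF assms] .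
  have "poly q 1 = poly (cheb k) ((2 - \<rho>) / \<rho>)"
    using assms by (simp add: q_def poly_pcompose field_simps)
  then have q1: "poly q 1 = 1 / rho_star k \<rho>" "0 < poly q 1"
    using T by simp_all
  have p_star: "p_star k \<rho> = smult (rho_star k \<rho>) q"
    using T by (simp add: p_star_def q_def abs_of_pos)
  have "degree q \<le> k"
    using degree_cheb_le[of k] by (simp add: q_def degree_pcompose)
  moreover have "\<forall>x\<in>{0..\<rho>}. \<bar>poly q x\<bar> \<le> 1"
    using assms by (auto simp: q_def poly_pcompose field_simps intro!: abs_poly_cheb_le_1)
  ultimately have "certifies_rho_tilde k \<rho> (rho_star k \<rho> * poly_l1 q) (rho_star k \<rho>) (p_star k \<rho>)"
    using certifies_rho_tilde_normalized[OF _ q1(2), of k \<rho> 1] q1(1) by (simp add: p_star mult.commute)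
  then show ?thesis
    using q1 by (simp add: C_star_def p_star poly_l1_smult)
qed

lemma monomial_certificate_margin:
  fixes r a :: real
  assumes "0 < r" "r < 1" "0 < k"
    and "a < r * (1 - r) * (2 - r) / (3 * (real k)\<^sup>2 * (2 + r)\<^sup>2)"
  shows "r / (2 - r) + 3 * a * (real k)\<^sup>2 * ((2 + r) / (2 - r))\<^sup>2 < r"
proof -
  define P where "P = 3 * (real k)\<^sup>2 * (2 + r)\<^sup>2"
  define Q where "Q = 2 - r"
  define K where "K = P / Q\<^sup>2"
  have "0 < P" "0 < Q" "0 < K"
    using assms by (simp_all add: P_def Q_def K_def)
  have "a * K < r * (1 - r) * Q / P * K"
    using assms(4) \<open>0 < K\<close> unfolding P_def Q_def by (rule mult_strict_right_mono)
  also have "\<dots> = r * (1 - r) / Q"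
    using \<open>0 < P\<close> \<open>0 < Q\<close> by (simp add: K_def field_simps power2_eq_square)
  also have "\<dots> = r - r / Q"
    using \<open>0 < Q\<close> by (simp add: Q_def field_simps)
  finally show ?thesis
    by (simp add: K_def P_def Q_def power_divide algebra_simps)
qed

lemma quadratic_term_less_if_less_divide:
  assumes "0 \<le> a" "a < (r - s) / (3 * (real k)\<^sup>2 * C\<^sup>2)"
  shows "s + 3 * a * (real k)\<^sup>2 * C\<^sup>2 < r"
proof -
  have "0 < 3 * (real k)\<^sup>2 * C\<^sup>2"
    using assms by (cases "3 * (real k)\<^sup>2 * C\<^sup>2 = 0") auto
  then show ?thesis
    using assms(2) by (simp add: pos_less_divide_eq algebra_simps)
qed

lemma onorm_lipschitz_const_nonneg:
  fixes H :: "real ^ 'n \<Rightarrow> real ^ 'n ^ 'n"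
  assumes "\<And>x y. onorm (\<lambda>h. H x *v h - H y *v h) \<le> \<eta> * dist x y"
  shows "0 \<le> \<eta>"
proof -
  define y :: "real ^ 'n" where "y = axis undefined 1"
  have "0 \<le> onorm (\<lambda>h. H 0 *v h - H y *v h)"
    by (intro onorm_pos_le bounded_linear_sub matrix_vector_mul_bounded_linear)
  also have "\<dots> \<le> \<eta> * dist 0 y"
    by (rule assms)
  finally show ?thesis
    by (simp add: y_def zero_le_mult_iff axis_eq_0_iff)
qed

theorem proposition8:
  fixes f :: "real ^ 'n \<Rightarrow> real"
    and f' :: "real ^ 'n \<Rightarrow> real ^ 'n"
    and H :: "real ^ 'n \<Rightarrow> real ^ 'n ^ 'n"
    and \<mu> L \<eta> :: real and x0 :: "real ^ 'n" and k :: nat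
    and \<rho> C0 a B :: real
  assumes grad: "\<And>x. (f has_derivative (\<lambda>h. f' x \<bullet> h)) (at x)"
    and hess: "\<And>x. (f' has_derivative (\<lambda>h. H x *v h)) (at x)"
    and hess_cont: "continuous_on UNIV H"
    and sconv: "strongly_convex_on UNIV \<mu> f"
    and grad_lip: "L-lipschitz_on UNIV f'"
    and hess_lip: "\<And>x y. onorm (\<lambda>h. H x *v h - H y *v h) \<le> \<eta> * dist x y"
    and mu_pos: "0 < \<mu>" and mu_L: "\<mu> < L"
    and k: "1 \<le> k"
    and rho_def: "\<rho> = 1 - \<mu> / L"
    and C0_def: "C0 = (2 + \<rho> ^ k) / (2 - \<rho> ^ k)"
    and a_def: "a = \<eta> / L\<^sup>2 * norm (f' x0)"
    and B_def: "B = \<rho> ^ k * (1 - \<rho> ^ k) * (2 - \<rho> ^ k) / (3 * (real k)\<^sup>2 * (2 + \<rho> ^ k)\<^sup>2)"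
  shows "(a < B \<longrightarrow>
           (\<exists>lo hi. 1 \<le> lo \<and> lo < hi \<and> C0 \<in> {lo..hi} \<and>
              (\<forall>C\<in>{lo..hi}. rho_hat k \<rho> a C < \<rho> ^ k)))
       \<and> (a < min B ((\<rho> ^ k - rho_one k \<rho>) / (3 * (real k)\<^sup>2 * (C_one k \<rho>)\<^sup>2)) \<longrightarrow>
           (\<forall>C\<in>{C0..C_one k \<rho>}. rho_hat k \<rho> a C < \<rho> ^ k))
       \<and> (a < min B ((\<rho> ^ k - rho_star k \<rho>) / (3 * (real k)\<^sup>2 * (C_star k \<rho>)\<^sup>2)) \<longrightarrow>
           (\<forall>C\<in>{C0..C_star k \<rho>}. rho_hat k \<rho> a C < \<rho> ^ k))"
proof -
  have \<rho>: "0 < \<rho>" "\<rho> < 1"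
    using mu_pos mu_L by (auto simp: rho_def field_simps)
  have r: "0 < \<rho> ^ k" "\<rho> ^ k < 1"
    using \<rho> k by (auto simp: power_less_one_iff)
  \<comment> \<open>The only use of the hypotheses on f: the Hessian Lipschitz bound forces \<eta> \<ge> 0.\<close>
  have "0 \<le> a"
    unfolding a_def using onorm_lipschitz_const_nonneg[OF hess_lip] by simp
  obtain p0 where p0: "certifies_rho_tilde k \<rho> C0 (\<rho> ^ k / (2 - \<rho> ^ k)) p0"
    using certifies_rho_tilde_monomial[of \<rho> k] \<rho> unfolding C0_def by force
  have margin: "\<rho> ^ k / (2 - \<rho> ^ k) + 3 * a * (real k)\<^sup>2 * C0\<^sup>2 < \<rho> ^ k" if "a < B"
    using monomial_certificate_margin[OF r] k that unfolding C0_def B_def by simp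
  have "1 \<le> C0"
    using r by (simp add: C0_def)
  show ?thesis
  proof (intro conjI impI)
    assume "a < B"
    then obtain hi where "C0 < hi" "\<forall>C\<in>{C0..hi}. rho_hat k \<rho> a C < \<rho> ^ k"
      using exists_rho_hat_less_right[OF \<open>0 \<le> a\<close> _ p0 margin] \<rho> by auto
    then show "\<exists>lo hi. 1 \<le> lo \<and> lo < hi \<and> C0 \<in> {lo..hi} \<and> (\<forall>C\<in>{lo..hi}. rho_hat k \<rho> a C < \<rho> ^ k)"
      using \<open>1 \<le> C0\<close> by (intro exI[of _ C0] exI[of _ hi]) auto
  next
    assume "a < min B ((\<rho> ^ k - rho_one k \<rho>) / (3 * (real k)\<^sup>2 * (C_one k \<rho>)\<^sup>2))"
    then show "\<forall>C\<in>{C0..C_one k \<rho>}. rho_hat k \<rho> a C < \<rho> ^ k"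
      using rho_hat_less_on_interval[OF \<open>0 \<le> a\<close> _ p0 certifies_rho_tilde_rho_one[OF \<rho>] margin
          quadratic_term_less_if_less_divide[OF \<open>0 \<le> a\<close>]] \<rho> by auto
  next
    assume "a < min B ((\<rho> ^ k - rho_star k \<rho>) / (3 * (real k)\<^sup>2 * (C_star k \<rho>)\<^sup>2))"
    then show "\<forall>C\<in>{C0..C_star k \<rho>}. rho_hat k \<rho> a C < \<rho> ^ k"
      using rho_hat_less_on_interval[OF \<open>0 \<le> a\<close> _ p0 certifies_rho_tilde_p_star[OF \<rho>] margin
          quadratic_term_less_if_less_divide[OF \<open>0 \<le> a\<close>]] \<rho> by auto
  qed
qed

end
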